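(* Let $\epsilon>0$. Define the randomized mechanism $\mathcal{M}$ (the BiSample mechanism) with input $v\in[-1,1]$ as follows: sample $s\in\{0,1\}$ uniformly at random; if $s=0$, generate a Bernoulli variable $b\in\{0,1\}$ with $$\Pr[b=1]=\frac{1-e^{\epsilon}}{1+e^{\epsilon}}\cdot\frac{v}{2}+\frac12;$$ if $s=1$, generate a Bernoulli variable $b\in\{0,1\}$ with $$\Pr[b=1]=\frac{e^{\epsilon}-1}{e^{\epsilon}+1}\cdot\frac{v}{2}+\frac12;$$ and output the pair $\langle s,b\rangle$. Then $\mathcal{M}$ satisfies $\epsilon$-local differential privacy, i.e. for all $t_1,t_2\in[-1,1]$ and every output $o\in\{0,1\}\times\{0,1\}$, $$\Pr[\mathcal{M}(t_1)=o]\le e^{\epsilon}\cdot\Pr[\mathcal{M}(t_2)=o].$$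
   Context: A randomized mechanism $\mathcal{M}$ satisfies $\epsilon$-local differential privacy ($\epsilon$-LDP) if for every two inputs $t_1,t_2$ in its domain and every output $t^*$ in its range, $\Pr[\mathcal{M}(t_1)=t^*]\le \exp(\epsilon)\Pr[\mathcal{M}(t_2)=t^*]$. *)

theory Defs
  imports "HOL-Probability.Probability"
begin

text \<open>Outputs are pairs (s, b) with s, b in {0,1}, encoded as bool (True = 1).\<close>

definition bisample :: "real \<Rightarrow> real \<Rightarrow> (bool \<times> bool) pmf" where
  "bisample \<epsilon> v =
     do { s \<leftarrow> bernoulli_pmf (1/2);
          b \<leftarrow> (if \<not> s
                then bernoulli_pmf ((1 - exp \<epsilon>) / (1 + exp \<epsilon>) * (v / 2) + 1/2)
                else bernoulli_pmf ((exp \<epsilon> - 1) / (exp \<epsilon> + 1) * (v / 2) + 1/2));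
          return_pmf (s, b) }"

definition eps_LDP :: "real \<Rightarrow> 'a set \<Rightarrow> ('a \<Rightarrow> 'b pmf) \<Rightarrow> bool" where
  "eps_LDP \<epsilon> D M \<longleftrightarrow>
     (\<forall>t1\<in>D. \<forall>t2\<in>D. \<forall>out. pmf (M t1) out \<le> exp \<epsilon> * pmf (M t2) out)"

end

theory Submission
  imports Defs
begin

text \<open>With \<open>c = (e\<^sup>\<epsilon> - 1) / (e\<^sup>\<epsilon> + 1)\<close>, the two coins of BiSample have biases \<open>1/2 \<plusminus> c v / 2\<close>,
  which for \<open>|v| \<le> 1\<close> lie in \<open>[1 / (e\<^sup>\<epsilon> + 1), e\<^sup>\<epsilon> / (e\<^sup>\<epsilon> + 1)]\<close>; this interval is closed under
  \<open>q \<mapsto> 1 - q\<close>. Hence, whatever the input, every output has probability between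
  \<open>1 / (2 (e\<^sup>\<epsilon> + 1))\<close> and \<open>e\<^sup>\<epsilon>\<close> times that value.\<close>

lemma eps_LDP_if_pmf_between:
  assumes "\<And>t out. t \<in> D \<Longrightarrow> a \<le> pmf (M t) out \<and> pmf (M t) out \<le> exp \<epsilon> * a"
  shows "eps_LDP \<epsilon> D M"
  unfolding eps_LDP_def
proof (intro ballI allI)
  fix t1 t2 out assume "t1 \<in> D" "t2 \<in> D"
  then have "pmf (M t1) out \<le> exp \<epsilon> * a" and "a \<le> pmf (M t2) out"
    using assms by blast+
  then show "pmf (M t1) out \<le> exp \<epsilon> * pmf (M t2) out"
    by (smt (verit) exp_gt_zero mult_left_mono)
qed

lemma pmf_bernoulli_between:
  fixes E p :: real
  assumes "0 < E" "1 / (E + 1) \<le> p" "p \<le> E / (E + 1)"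
  shows "1 / (E + 1) \<le> pmf (bernoulli_pmf p) b \<and> pmf (bernoulli_pmf p) b \<le> E / (E + 1)"
proof -
  have "1 - 1 / (E + 1) = E / (E + 1)"
    using \<open>0 < E\<close> by (simp add: field_simps)
  moreover have "0 \<le> p" "p \<le> 1"
  proof -
    have "0 \<le> 1 / (E + 1)" "E / (E + 1) \<le> 1"
      using \<open>0 < E\<close> by simp_all
    then show "0 \<le> p" "p \<le> 1"
      using assms(2,3) by linarith+
  qed
  ultimately show ?thesis
    using assms(2,3) by (cases b) simp_all
qed

lemma scaled_half_shift_between:
  fixes E c v :: real
  assumes "0 < E" "\<bar>c\<bar> \<le> (E - 1) / (E + 1)" "\<bar>v\<bar> \<le> 1"
  shows "1 / (E + 1) \<le> c * (v / 2) + 1 / 2 \<and> c * (v / 2) + 1 / 2 \<le> E / (E + 1)"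
proof -
  define K where "K = (E - 1) / (E + 1)"
  have "\<bar>c * v\<bar> \<le> K"
    using assms(2,3) unfolding K_def abs_mult by (metis abs_ge_zero mult_left_le order_trans)
  moreover have "1 / (E + 1) = 1 / 2 - K / 2" "E / (E + 1) = 1 / 2 + K / 2"
    using \<open>0 < E\<close> by (simp_all add: K_def field_simps)
  ultimately show ?thesis
    unfolding abs_le_iff by simp
qed

lemma pmf_bind_bernoulli_Pair:
  "pmf (bernoulli_pmf q \<bind> (\<lambda>b. return_pmf (s', b))) (s, b) =
     (if s' = s then pmf (bernoulli_pmf q) b else 0)"
proof -
  have "bernoulli_pmf q \<bind> (\<lambda>b. return_pmf (s', b)) = map_pmf (Pair s') (bernoulli_pmf q)"
    by (simp add: map_pmf_def)
  moreover have "pmf (map_pmf (Pair s) (bernoulli_pmf q)) (s, b) = pmf (bernoulli_pmf q) b"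
    by (rule pmf_map_inj') (simp add: inj_def)
  moreover have "pmf (map_pmf (Pair s') (bernoulli_pmf q)) (s, b) = 0" if "s' \<noteq> s"
    using that by (simp add: pmf_eq_0_set_pmf image_iff)
  ultimately show ?thesis
    by simp
qed

lemma pmf_bisample:
  "pmf (bisample \<epsilon> v) (s, b) =
     pmf (bernoulli_pmf ((if s then (exp \<epsilon> - 1) / (exp \<epsilon> + 1) else (1 - exp \<epsilon>) / (1 + exp \<epsilon>))
                         * (v / 2) + 1 / 2)) b / 2"
  unfolding bisample_def
  by (subst pmf_bind, subst integral_bernoulli_pmf) (simp_all add: pmf_bind_bernoulli_Pair)

lemma pmf_bisample_between:
  assumes "0 \<le> \<epsilon>" "\<bar>v\<bar> \<le> 1"
  shows "1 / (2 * (exp \<epsilon> + 1)) \<le> pmf (bisample \<epsilon> v) out \<and>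
         pmf (bisample \<epsilon> v) out \<le> exp \<epsilon> / (2 * (exp \<epsilon> + 1))"
proof -
  obtain s b where out: "out = (s, b)"
    by fastforce
  define c where "c = (if s then (exp \<epsilon> - 1) / (exp \<epsilon> + 1) else (1 - exp \<epsilon>) / (1 + exp \<epsilon>))"
  have "\<bar>c\<bar> = (exp \<epsilon> - 1) / (exp \<epsilon> + 1)"
    using \<open>0 \<le> \<epsilon>\<close> by (simp add: c_def abs_div_pos add.commute)
  then have bernoulli_between:
      "1 / (exp \<epsilon> + 1) \<le> pmf (bernoulli_pmf (c * (v / 2) + 1 / 2)) b \<and>
       pmf (bernoulli_pmf (c * (v / 2) + 1 / 2)) b \<le> exp \<epsilon> / (exp \<epsilon> + 1)"
    using scaled_half_shift_between pmf_bernoulli_between exp_gt_zero \<open>\<bar>v\<bar> \<le> 1\<close>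
    by (metis order_refl)
  have "pmf (bisample \<epsilon> v) out = pmf (bernoulli_pmf (c * (v / 2) + 1 / 2)) b / 2"
    unfolding out pmf_bisample c_def ..
  moreover have "1 / (2 * (exp \<epsilon> + 1)) = 1 / (exp \<epsilon> + 1) / 2"
    and "exp \<epsilon> / (2 * (exp \<epsilon> + 1)) = exp \<epsilon> / (exp \<epsilon> + 1) / 2"
    by simp_all
  ultimately show ?thesis
    using bernoulli_between by (simp only: divide_right_mono zero_le_numeral)
qed

theorem theorem1:
  fixes \<epsilon> :: real
  assumes "\<epsilon> > 0"
  shows "eps_LDP \<epsilon> {-1..1} (bisample \<epsilon>)"
proof (rule eps_LDP_if_pmf_between)
  fix t out assume "t \<in> {-1..1::real}"
  then have "\<bar>t\<bar> \<le> 1"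
    by auto
  then show "1 / (2 * (exp \<epsilon> + 1)) \<le> pmf (bisample \<epsilon> t) out \<and>
             pmf (bisample \<epsilon> t) out \<le> exp \<epsilon> * (1 / (2 * (exp \<epsilon> + 1)))"
    using pmf_bisample_between[of \<epsilon> t out] assms by simp
qed

end
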